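(* Let $G$ be a graph all of whose $\operatorname{IR}(G)$-sets are independent. If the $\operatorname{IR}$-graph $H=G(\operatorname{IR})$ is connected and has at least three vertices, then $H$ contains a triangle or an induced $C_4$.
   Context: All graphs are finite and simple. For $G=(V,E)$, $D\subseteq V$, $v\in D$: $\operatorname{PN}(v,D)=N[v]-N[D-\{v\}]$ (closed neighbourhoods). $D$ is irredundant if $\operatorname{PN}(v,D)\neq\varnothing$ for all $v\in D$; $\operatorname{IR}(G)$ is the maximum size of an irredundant set; an $\operatorname{IR}(G)$-set is an irredundant set of that size. $G(\operatorname{IR})$ has the $\operatorname{IR}(G)$-sets as vertices, with $D\sim D'$ iff there exist $u\in D$, $v\in D'$ with $uv\in E(G)$ and $D'=(D-\{u\})\cup\{v\}$. *)

theory Defs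
  imports Main
begin

definition simple_graph :: "'a set \<Rightarrow> ('a \<Rightarrow> 'a \<Rightarrow> bool) \<Rightarrow> bool" where
  "simple_graph V E \<longleftrightarrow> finite V \<and>
     (\<forall>u v. E u v \<longrightarrow> u \<in> V \<and> v \<in> V \<and> u \<noteq> v \<and> E v u)"

definition cnbhd :: "'a set \<Rightarrow> ('a \<Rightarrow> 'a \<Rightarrow> bool) \<Rightarrow> 'a \<Rightarrow> 'a set" where
  "cnbhd V E v = {u \<in> V. u = v \<or> E v u}"

definition cnbhd_set :: "'a set \<Rightarrow> ('a \<Rightarrow> 'a \<Rightarrow> bool) \<Rightarrow> 'a set \<Rightarrow> 'a set" where
  "cnbhd_set V E S = (\<Union>v\<in>S. cnbhd V E v)"

definition PN :: "'a set \<Rightarrow> ('a \<Rightarrow> 'a \<Rightarrow> bool) \<Rightarrow> 'a \<Rightarrow> 'a set \<Rightarrow> 'a set" where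
  "PN V E v D = cnbhd V E v - cnbhd_set V E (D - {v})"

definition irredundant :: "'a set \<Rightarrow> ('a \<Rightarrow> 'a \<Rightarrow> bool) \<Rightarrow> 'a set \<Rightarrow> bool" where
  "irredundant V E D \<longleftrightarrow> D \<subseteq> V \<and> (\<forall>v\<in>D. PN V E v D \<noteq> {})"

definition IR :: "'a set \<Rightarrow> ('a \<Rightarrow> 'a \<Rightarrow> bool) \<Rightarrow> nat" where
  "IR V E = Max {card D | D. irredundant V E D}"

definition IR_set :: "'a set \<Rightarrow> ('a \<Rightarrow> 'a \<Rightarrow> bool) \<Rightarrow> 'a set \<Rightarrow> bool" where
  "IR_set V E D \<longleftrightarrow> irredundant V E D \<and> card D = IR V E"

definition IR_adj :: "'a set \<Rightarrow> ('a \<Rightarrow> 'a \<Rightarrow> bool) \<Rightarrow> 'a set \<Rightarrow> 'a set \<Rightarrow> bool" where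
  "IR_adj V E D D' \<longleftrightarrow> IR_set V E D \<and> IR_set V E D' \<and>
     (\<exists>u\<in>D. \<exists>v\<in>D'. E u v \<and> D' = (D - {u}) \<union> {v})"

definition independent :: "('a \<Rightarrow> 'a \<Rightarrow> bool) \<Rightarrow> 'a set \<Rightarrow> bool" where
  "independent E D \<longleftrightarrow> (\<forall>u\<in>D. \<forall>v\<in>D. \<not> E u v)"

definition IR_graph_connected :: "'a set \<Rightarrow> ('a \<Rightarrow> 'a \<Rightarrow> bool) \<Rightarrow> bool" where
  "IR_graph_connected V E \<longleftrightarrow>
     (\<forall>D D'. IR_set V E D \<longrightarrow> IR_set V E D' \<longrightarrow> (IR_adj V E)\<^sup>*\<^sup>* D D')"

definition IR_graph_has_triangle :: "'a set \<Rightarrow> ('a \<Rightarrow> 'a \<Rightarrow> bool) \<Rightarrow> bool" where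
  "IR_graph_has_triangle V E \<longleftrightarrow>
     (\<exists>A B C. IR_adj V E A B \<and> IR_adj V E B C \<and> IR_adj V E C A)"

definition IR_graph_has_induced_C4 :: "'a set \<Rightarrow> ('a \<Rightarrow> 'a \<Rightarrow> bool) \<Rightarrow> bool" where
  "IR_graph_has_induced_C4 V E \<longleftrightarrow>
     (\<exists>A B C D. distinct [A, B, C, D] \<and>
        IR_adj V E A B \<and> IR_adj V E B C \<and> IR_adj V E C D \<and> IR_adj V E D A \<and>
        \<not> IR_adj V E A C \<and> \<not> IR_adj V E B D)"

end

theory Submission
  imports Defs
begin

(* A connected IR-graph with at least three vertices contains a path D1 ~ D2 ~ D3 with
   D1 \<noteq> D3, say D2 = D1 - {u} + {v} and D3 = D2 - {x} + {y} with uv and xy edges.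
   If x = v, then D3 = D1 - {u} + {y}, and uy must be an edge, for otherwise D1 + {y} would be
   an independent, hence irredundant, set larger than IR(G); so D3 ~ D1 closes a triangle.
   If x \<noteq> v, perform the two exchanges in the opposite order: M = D1 - {x} + {y} is
   irredundant (y keeps x as private neighbour, u keeps v, every other vertex is its own),
   hence an IR-set, and D1 D2 D3 M is a 4-cycle; it is induced because D1, D3 differ in the
   two vertices u, x and D2, M in the two vertices v, x. *)

lemma independent_imp_irredundant:
  assumes "D \<subseteq> V" "independent E D"
  shows "irredundant V E D"
  unfolding irredundant_def
proof (intro conjI ballI)
  fix w assume "w \<in> D"
  then have "w \<in> PN V E w D"
    using assms unfolding PN_def cnbhd_def cnbhd_set_def independent_def by auto
  then show "PN V E w D \<noteq> {}" by blast
qed (use assms in simp)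

lemma irredundant_card_le_IR:
  assumes "finite V" "irredundant V E D"
  shows "card D \<le> IR V E"
proof -
  have "{card D | D. irredundant V E D} \<subseteq> card ` Pow V"
    unfolding irredundant_def by auto
  then have "finite {card D | D. irredundant V E D}"
    using assms(1) by (meson finite_Pow_iff finite_imageI finite_subset)
  then show ?thesis
    unfolding IR_def using assms(2) by (auto intro: Max_ge)
qed

lemma IR_adj_diff_unique:
  assumes "IR_adj V E A B" "a \<in> A - B" "a' \<in> A - B"
  shows "a = a'"
  using assms unfolding IR_adj_def by auto

lemma symp_connected_path_length_two:
  assumes "symp R" and connected: "\<forall>a\<in>S. \<forall>b\<in>S. R\<^sup>*\<^sup>* a b" and "3 \<le> card S"
  shows "\<exists>a b c. R a b \<and> R b c \<and> a \<noteq> c"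
proof (rule ccontr)
  assume no_path: "\<not> ?thesis"
  obtain T where "T \<subseteq> S" "card T = 3"
    using obtain_subset_with_card_n[OF assms(3)] by blast
  then obtain a b c where abc: "a \<in> S" "b \<in> S" "c \<in> S" "a \<noteq> b" "a \<noteq> c" "b \<noteq> c"
    unfolding card_3_iff by auto
  have reach: "d = a \<or> R a d" if "R\<^sup>*\<^sup>* a d" for d
    using that
  proof (induction rule: rtranclp_induct)
    case (step d e)
    then show ?case using no_path by blast
  qed simp
  have "R a b" "R a c"
    using reach connected abc by blast+
  then show False
    using no_path sympD[OF \<open>symp R\<close>] \<open>b \<noteq> c\<close> by blast
qed

locale IR_independent_graph =
  fixes V :: "'a set" and E :: "'a \<Rightarrow> 'a \<Rightarrow> bool"
  assumes simple_graph: "simple_graph V E"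
    and IR_set_independent: "IR_set V E D \<Longrightarrow> independent E D"
begin

lemma finite_V: "finite V"
  using simple_graph unfolding simple_graph_def by blast

lemma edge_sym: "E u v \<Longrightarrow> E v u"
  using simple_graph unfolding simple_graph_def by blast

lemma edge_in_V: "E u v \<Longrightarrow> u \<in> V \<and> v \<in> V"
  using simple_graph unfolding simple_graph_def by blast

lemma IR_set_subset: "IR_set V E D \<Longrightarrow> D \<subseteq> V"
  unfolding IR_set_def irredundant_def by blast

lemma IR_set_finite: "IR_set V E D \<Longrightarrow> finite D"
  using IR_set_subset finite_V finite_subset by blast

lemma IR_adjI:
  assumes "IR_set V E D" "IR_set V E D'" "u \<in> D" "E u v" "D' = insert v (D - {u})"
  shows "IR_adj V E D D'"
  using assms unfolding IR_adj_def by auto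

lemma IR_adjE:
  assumes "IR_adj V E D D'"
  obtains u v where "IR_set V E D" "IR_set V E D'" "u \<in> D" "v \<notin> D" "E u v"
    "D' = insert v (D - {u})"
proof -
  obtain u v where uv: "u \<in> D" "E u v" "D' = insert v (D - {u})"
    and sets: "IR_set V E D" "IR_set V E D'"
    using assms unfolding IR_adj_def by auto
  moreover have "v \<notin> D"
    using IR_set_independent[OF sets(1)] uv unfolding independent_def by blast
  ultimately show thesis using that by blast
qed

lemma IR_adj_sym:
  assumes "IR_adj V E A B"
  shows "IR_adj V E B A"
proof -
  obtain u v where sets: "IR_set V E A" "IR_set V E B" and uv: "u \<in> A" "v \<notin> A" "E u v"
    and B: "B = insert v (A - {u})"
    using assms by (rule IR_adjE)
  have "A = insert u (B - {v})"
    using B uv by auto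
  then show ?thesis
    using sets B edge_sym[OF \<open>E u v\<close>] by (intro IR_adjI[of B A v u]) auto
qed

lemma IR_set_insert_dependent:
  assumes "IR_set V E D" "y \<in> V - D"
  shows "\<not> independent E (insert y D)"
proof
  assume "independent E (insert y D)"
  then have "card (insert y D) \<le> IR V E"
    using assms IR_set_subset finite_V
    by (intro irredundant_card_le_IR independent_imp_irredundant) auto
  then show False
    using assms IR_set_finite unfolding IR_set_def by simp
qed

lemma IR_set_exchange_edge:
  assumes "IR_set V E D" "IR_set V E D'" "u \<in> D" "y \<notin> D" "D' = insert y (D - {u})"
  shows "E u y"
proof (rule ccontr)
  assume "\<not> E u y"
  moreover have "\<not> E y u"
    using calculation edge_sym by blast
  ultimately have "independent E (insert y D)"
    using assms IR_set_independent[OF assms(1)] IR_set_independent[OF assms(2)]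
    unfolding independent_def by blast
  moreover have "y \<in> V"
    using assms IR_set_subset by blast
  ultimately show False
    using IR_set_insert_dependent assms by blast
qed

lemma irredundant_reordered_exchange:
  assumes "D \<subseteq> V" "independent E D" "independent E D'"
    and "u \<in> D" "x \<in> D" "u \<noteq> x" "E u v" "E x y" "v \<noteq> y"
    and "D' = insert v (insert y (D - {u, x}))"
  shows "irredundant V E (insert y (D - {x}))" (is "irredundant V E ?M")
  unfolding irredundant_def
proof (intro conjI ballI)
  show "?M \<subseteq> V"
    using assms edge_in_V by blast
  have "v \<notin> D" "y \<notin> D" "y \<noteq> u"
    using assms unfolding independent_def by blast+
  fix w assume "w \<in> ?M"
  then consider "w = y" | "w = u" | "w \<in> D - {u, x}" "w \<noteq> y"
    by blast
  then show "PN V E w ?M \<noteq> {}"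
  proof cases
    case 1
    have "x \<in> PN V E w ?M"
      using 1 assms edge_sym[OF \<open>E x y\<close>]
      unfolding PN_def cnbhd_def cnbhd_set_def independent_def by auto
    then show ?thesis by blast
  next
    case 2
    have "v \<in> PN V E w ?M"
      using 2 assms \<open>v \<notin> D\<close> \<open>y \<noteq> u\<close> edge_in_V[OF \<open>E u v\<close>]
      unfolding PN_def cnbhd_def cnbhd_set_def independent_def by auto
    then show ?thesis by blast
  next
    case 3
    have "w \<in> PN V E w ?M"
      using 3 assms
      unfolding PN_def cnbhd_def cnbhd_set_def independent_def by auto
    then show ?thesis by blast
  qed
qed

lemma induced_C4_of_exchanges:
  assumes sets: "IR_set V E D1" "IR_set V E D2" "IR_set V E D3"
    and "u \<in> D1" "x \<in> D1" "u \<noteq> x" "v \<notin> D1" "y \<notin> D1" "v \<noteq> y" "E u v" "E x y"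
    and "D2 = insert v (D1 - {u})" "D3 = insert v (insert y (D1 - {u, x}))"
  shows "IR_graph_has_induced_C4 V E"
proof -
  define M where "M = insert y (D1 - {x})"
  have "irredundant V E M"
    unfolding M_def using assms IR_set_subset IR_set_independent
    by (intro irredundant_reordered_exchange[where D' = D3 and u = u and v = v]) auto
  moreover have "card M = card D1"
    unfolding M_def using assms IR_set_finite[OF sets(1)]
    by (simp add: card_Suc_Diff1 del: card_Diff_insert)
  ultimately have M: "IR_set V E M"
    using sets(1) unfolding IR_set_def by simp
  have "IR_adj V E D1 D2"
    using assms by (intro IR_adjI) auto
  moreover have "IR_adj V E D2 D3"
    using assms by (intro IR_adjI[where u = x and v = y]) auto
  moreover have "IR_adj V E D3 M"
    using assms M edge_sym[OF \<open>E u v\<close>] unfolding M_def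
    by (intro IR_adjI[where u = v and v = u]) auto
  moreover have "IR_adj V E M D1"
    using assms M edge_sym[OF \<open>E x y\<close>] unfolding M_def
    by (intro IR_adjI[where u = y and v = x]) auto
  moreover have "\<not> IR_adj V E D1 D3"
    using IR_adj_diff_unique[of V E D1 D3 u x] assms by auto
  moreover have "\<not> IR_adj V E D2 M"
    using IR_adj_diff_unique[of V E D2 M v x] assms unfolding M_def by auto
  moreover have "distinct [D1, D2, D3, M]"
    using assms unfolding M_def by auto
  ultimately show ?thesis
    unfolding IR_graph_has_induced_C4_def by blast
qed

lemma IR_path_triangle_or_induced_C4:
  assumes "IR_adj V E D1 D2" "IR_adj V E D2 D3" "D1 \<noteq> D3"
  shows "IR_graph_has_triangle V E \<or> IR_graph_has_induced_C4 V E"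
proof -
  obtain u v where sets: "IR_set V E D1" "IR_set V E D2" and uv: "u \<in> D1" "v \<notin> D1" "E u v"
    and D2: "D2 = insert v (D1 - {u})"
    using assms(1) by (rule IR_adjE)
  obtain x y where D3_set: "IR_set V E D3" and xy: "x \<in> D2" "y \<notin> D2" "E x y"
    and D3: "D3 = insert y (D2 - {x})"
    using assms(2) by (rule IR_adjE)
  show ?thesis
  proof (cases "x = v")
    case True
    then have D3_D1: "D3 = insert y (D1 - {u})"
      using D2 D3 uv by auto
    moreover have "y \<notin> D1"
      using D3_D1 D2 xy uv assms(3) by auto
    ultimately have "E u y"
      using sets D3_set uv by (intro IR_set_exchange_edge)
    moreover have "D1 = insert u (D3 - {y})"
      using D3_D1 uv \<open>y \<notin> D1\<close> by auto
    ultimately have "IR_adj V E D3 D1"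
      using sets D3_set D3_D1 edge_sym[OF \<open>E u y\<close>] by (intro IR_adjI[where u = y and v = u]) auto
    then show ?thesis
      using assms unfolding IR_graph_has_triangle_def by blast
  next
    case False
    have D3_D1: "D3 = insert v (insert y (D1 - {u, x}))"
      using D2 D3 False by auto
    have "y \<noteq> u"
      using IR_set_independent[OF D3_set] D3_D1 uv unfolding independent_def by auto
    then show ?thesis
      using D2 D3_D1 uv xy False sets D3_set
      by (intro disjI2 induced_C4_of_exchanges[where u = u and v = v and x = x and y = y]) auto
  qed
qed

end

theorem lemma4p5:
  fixes V :: "'a set" and E :: "'a \<Rightarrow> 'a \<Rightarrow> bool"
  assumes "simple_graph V E"
    and "\<forall>D. IR_set V E D \<longrightarrow> independent E D"
    and "IR_graph_connected V E"
    and "card {D. IR_set V E D} \<ge> 3"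
  shows "IR_graph_has_triangle V E \<or> IR_graph_has_induced_C4 V E"
proof -
  interpret IR_independent_graph V E
    using assms(1,2) by unfold_locales auto
  have "symp (IR_adj V E)"
    using IR_adj_sym by (intro sympI)
  moreover have "\<forall>A\<in>{D. IR_set V E D}. \<forall>B\<in>{D. IR_set V E D}. (IR_adj V E)\<^sup>*\<^sup>* A B"
    using assms(3) unfolding IR_graph_connected_def by blast
  ultimately obtain D1 D2 D3 where "IR_adj V E D1 D2" "IR_adj V E D2 D3" "D1 \<noteq> D3"
    using symp_connected_path_length_two assms(4) by blast
  then show ?thesis
    by (rule IR_path_triangle_or_induced_C4)
qed

end
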